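(* There exist absolute constants $a,b>0$ such that the following holds. Let $A$ be a finite multiset of $n$ points in $\mathbb{R}^d$ and $\varepsilon,\delta\in(0,1)$. Let $k=b\log\delta^{-1}$ and, for $i=1,\dots,k$, let $\hat\mu_i$ be the average of $a\varepsilon^{-1}$ points drawn independently and uniformly at random from $A$ (all draws independent). Then, with probability at least $1-\delta$, every geometric median $m\in\arg\min_{c\in\mathbb{R}^d}\sum_{i=1}^{k}\|\hat\mu_i-c\|$ is a $(1+\varepsilon)$-approximate mean of $A$.
   Context: For a finite multiset $A\subset\mathbb{R}^d$, let $\mathrm{Opt}=\min_{x\in\mathbb{R}^d}\sum_{p\in A}\|p-x\|^2$ (Euclidean norm). A point $x$ is a $(1+\varepsilon)$-approximate mean of $A$ if $\sum_{p\in A}\|p-x\|^2\le(1+\varepsilon)\mathrm{Opt}$. Integrality of $k$ and $a\varepsilon^{-1}$ is ignored. *)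

theory Defs
  imports "HOL-Probability.Probability"
begin

text \<open>Points of R^d are represented as functions nat => real vanishing outside {0..<d},
  so that the dimension d can be quantified inside the statement (the constants a, b
  must be absolute, i.e. independent of d).\<close>

definition rvec :: "nat \<Rightarrow> (nat \<Rightarrow> real) set" where
  "rvec d = {x. \<forall>i\<ge>d. x i = 0}"

definition enorm :: "nat \<Rightarrow> (nat \<Rightarrow> real) \<Rightarrow> real" where
  "enorm d x = sqrt (\<Sum>i<d. (x i)^2)"

definition vdiff :: "(nat \<Rightarrow> real) \<Rightarrow> (nat \<Rightarrow> real) \<Rightarrow> (nat \<Rightarrow> real)" where
  "vdiff x y = (\<lambda>t. x t - y t)"

definition sqcost :: "nat \<Rightarrow> (nat \<Rightarrow> real) multiset \<Rightarrow> (nat \<Rightarrow> real) \<Rightarrow> real" where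
  "sqcost d A c = (\<Sum>p\<in>#A. (enorm d (vdiff p c))^2)"

definition Opt :: "nat \<Rightarrow> (nat \<Rightarrow> real) multiset \<Rightarrow> real" where
  "Opt d A = Inf (sqcost d A ` rvec d)"

definition approx_mean :: "nat \<Rightarrow> (nat \<Rightarrow> real) multiset \<Rightarrow> real \<Rightarrow> (nat \<Rightarrow> real) \<Rightarrow> bool" where
  "approx_mean d A eps x \<longleftrightarrow> x \<in> rvec d \<and> sqcost d A x \<le> (1 + eps) * Opt d A"

definition geo_median :: "nat \<Rightarrow> nat \<Rightarrow> (nat \<Rightarrow> nat \<Rightarrow> real) \<Rightarrow> (nat \<Rightarrow> real) \<Rightarrow> bool" where
  "geo_median d k mu m \<longleftrightarrow> m \<in> rvec d \<and>
     (\<forall>c\<in>rvec d. (\<Sum>i<k. enorm d (vdiff (mu i) m)) \<le> (\<Sum>i<k. enorm d (vdiff (mu i) c)))"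

definition draws :: "(nat \<Rightarrow> real) multiset \<Rightarrow> nat \<Rightarrow> nat \<Rightarrow> (nat \<times> nat \<Rightarrow> nat \<Rightarrow> real) pmf" where
  "draws A k s = Pi_pmf ({0..<k} \<times> {0..<s}) (\<lambda>_. 0) (\<lambda>_. pmf_of_multiset A)"

definition group_mean :: "nat \<Rightarrow> (nat \<times> nat \<Rightarrow> nat \<Rightarrow> real) \<Rightarrow> nat \<Rightarrow> nat \<Rightarrow> real" where
  "group_mean s x i = (\<lambda>t. (\<Sum>j<s. x (i, j) t) / real s)"

end

theory Submission
  imports Defs
begin

(* The squared cost of c is the optimal cost plus n |c - mu|^2, where mu is the
   centroid, so a (1 + eps)-approximate mean is a point within squared distance eps Opt / n of mu.
   A mean of s uniform draws is at expected squared distance Opt / (n s) from mu, so by Markov's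
   inequality it lies farther than r = sqrt (512 Opt / (n s)) with probability at most
   1/512 = (1/8)^3. A geometric median of k points lies within 4 r of mu unless at least a third
   of the points are farther than r from mu; by independence of the k groups and a union bound
   over the at most 2^k sets of groups, this happens with probability at most (2/8)^k, which is at
   most delta once k >= ln (1 / delta). Finally 16 r^2 <= eps Opt / n once s >= 8192 / eps. *)

lemma sum_mset_sum_swap: "(\<Sum>p\<in>#A. \<Sum>i\<in>I. f p i) = (\<Sum>i\<in>I. \<Sum>p\<in>#A. f p i)"
  by (induction A) (auto simp: sum.distrib)

lemma sum_mset_eq_sum_count:
  fixes f :: "'a \<Rightarrow> 'b::comm_semiring_1"
  shows "(\<Sum>p\<in>#A. f p) = (\<Sum>x\<in>set_mset A. of_nat (count A x) * f x)"
proof -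
  have "(\<Sum>x\<in>set_mset A. of_nat (count A x) * f x)
      = (\<Sum>x\<in>set_mset A. \<Sum>p\<in>#A. if p = x then f x else 0)"
    by (simp add: sum_mset_delta mult.commute)
  also have "\<dots> = (\<Sum>p\<in>#A. \<Sum>x\<in>set_mset A. if p = x then f x else 0)"
    by (rule sum_mset_sum_swap[symmetric])
  also have "\<dots> = (\<Sum>p\<in>#A. f p)"
    by (intro arg_cong[where f = sum_mset] image_mset_cong) simp
  finally show ?thesis ..
qed

lemma enorm_nonneg: "0 \<le> enorm d x"
  unfolding enorm_def by (simp add: sum_nonneg)

lemma enorm_squared: "(enorm d x)^2 = (\<Sum>i<d. (x i)^2)"
  by (simp add: enorm_def sum_nonneg)

lemma enorm_vdiff_commute: "enorm d (vdiff x y) = enorm d (vdiff y x)"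
  unfolding enorm_def vdiff_def by (simp add: power2_commute)

lemma enorm_vdiff_triangle: "enorm d (vdiff x z) \<le> enorm d (vdiff x y) + enorm d (vdiff y z)"
  using L2_set_triangle_ineq[of "\<lambda>i. x i - y i" "\<lambda>i. y i - z i" "{..<d}"]
  by (simp add: enorm_def vdiff_def L2_set_def)

lemma sum_dist_minimiser_close:
  fixes \<delta> :: "'a \<Rightarrow> 'a \<Rightarrow> real"
  assumes commute: "\<And>x y. \<delta> x y = \<delta> y x" and triangle: "\<And>x y z. \<delta> x z \<le> \<delta> x y + \<delta> y z"
    and "finite I" and min: "(\<Sum>i\<in>I. \<delta> (y i) m) \<le> (\<Sum>i\<in>I. \<delta> (y i) c)"
    and few: "3 * card {i\<in>I. r < \<delta> (y i) c} < card I"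
  shows "\<delta> m c \<le> 4 * r"
proof -
  define B where "B = {i\<in>I. r < \<delta> (y i) c}"
  have B: "finite B" "B \<subseteq> I" using \<open>finite I\<close> by (auto simp: B_def)
  have few': "3 * real (card B) < card I" using few by (simp add: B_def)
  have nonneg: "0 \<le> \<delta> x y" for x y
    using triangle[of x x x] triangle[of x x y] commute[of x y] by linarith
  have "0 \<le> r"
  proof (rule ccontr)
    assume "\<not> 0 \<le> r"
    then have "B = I" using nonneg[THEN order.strict_trans2[rotated]] by (auto simp: B_def)
    then show False using few' by simp
  qed
  have far: "- \<delta> m c \<le> \<delta> (y i) m - \<delta> (y i) c" for i
    using triangle[of "y i" c m] by simp
  have near: "\<delta> m c - 2 * r \<le> \<delta> (y i) m - \<delta> (y i) c" if "i \<in> I - B" for i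
    using triangle[of m c "y i"] commute[of m "y i"] that by (auto simp: B_def)
  have "(\<Sum>i\<in>B. - \<delta> m c) + (\<Sum>i\<in>I - B. \<delta> m c - 2 * r)
      \<le> (\<Sum>i\<in>B. \<delta> (y i) m - \<delta> (y i) c) + (\<Sum>i\<in>I - B. \<delta> (y i) m - \<delta> (y i) c)"
    using far near by (intro add_mono sum_mono) auto
  also have "\<dots> = (\<Sum>i\<in>I. \<delta> (y i) m - \<delta> (y i) c)"
    using sum.subset_diff[OF B(2) \<open>finite I\<close>, of "\<lambda>i. \<delta> (y i) m - \<delta> (y i) c"] by simp
  also have "\<dots> \<le> 0" using min by (simp add: sum_subtractf)
  finally have "(real (card I) - 2 * card B) * \<delta> m c \<le> 2 * r * (real (card I) - card B)"
    using B card_mono[OF \<open>finite I\<close> B(2)] by (simp add: card_Diff_subset of_nat_diff algebra_simps)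
  also have "\<dots> \<le> (real (card I) - 2 * card B) * (4 * r)"
    using mult_left_mono[OF less_imp_le[OF few'] \<open>0 \<le> r\<close>] by (simp add: algebra_simps)
  finally show ?thesis
    using few' by (simp add: mult_le_cancel_left_pos)
qed

definition centroid :: "(nat \<Rightarrow> real) multiset \<Rightarrow> nat \<Rightarrow> real" where
  "centroid A = (\<lambda>t. (\<Sum>p\<in>#A. p t) / real (size A))"

lemma centroid_in_rvec: "set_mset A \<subseteq> rvec d \<Longrightarrow> centroid A \<in> rvec d"
  by (auto simp: rvec_def centroid_def subset_iff intro!: sum_mset.neutral)

lemma sum_mset_minus_centroid:
  assumes "A \<noteq> {#}"
  shows "(\<Sum>p\<in>#A. p t - centroid A t) = 0"
proof -
  have "(\<Sum>p\<in>#A. p t - c) = (\<Sum>p\<in>#A. p t) - real (size A) * c" for c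
    by (induction A) (auto simp: algebra_simps)
  then show ?thesis using assms by (simp add: centroid_def)
qed

lemma sqcost_nonneg: "0 \<le> sqcost d A c"
proof -
  have "(\<Sum>p\<in>#A. 0) \<le> sqcost d A c"
    unfolding sqcost_def by (rule sum_mset_mono) simp
  then show ?thesis by simp
qed

lemma sqcost_eq_sqcost_centroid_plus:
  assumes "A \<noteq> {#}"
  shows "sqcost d A c
       = sqcost d A (centroid A) + real (size A) * (enorm d (vdiff c (centroid A)))^2"
proof -
  let ?\<mu> = "centroid A"
  have expand: "(p t - c t)^2 = (p t - ?\<mu> t)^2 + 2 * (?\<mu> t - c t) * (p t - ?\<mu> t) + (c t - ?\<mu> t)^2"
    for p :: "nat \<Rightarrow> real" and t
    by (simp add: power2_eq_square algebra_simps)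
  have "sqcost d A c
      = (\<Sum>t<d. \<Sum>p\<in>#A. (p t - ?\<mu> t)^2 + 2 * (?\<mu> t - c t) * (p t - ?\<mu> t) + (c t - ?\<mu> t)^2)"
    by (simp add: sqcost_def enorm_squared vdiff_def expand sum_mset_sum_swap)
  also have "\<dots> = sqcost d A ?\<mu> + (\<Sum>t<d. 2 * (?\<mu> t - c t) * (\<Sum>p\<in>#A. p t - ?\<mu> t))
      + real (size A) * (\<Sum>t<d. (c t - ?\<mu> t)^2)"
    by (simp add: sqcost_def enorm_squared vdiff_def sum_mset.distrib sum_mset_sum_swap
        sum_mset_distrib_left sum.distrib sum_distrib_left)
  finally show ?thesis
    using assms by (simp add: sum_mset_minus_centroid enorm_squared vdiff_def)
qed

lemma Opt_eq_sqcost_centroid: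
  assumes "A \<noteq> {#}" "set_mset A \<subseteq> rvec d"
  shows "Opt d A = sqcost d A (centroid A)"
  unfolding Opt_def
proof (rule cInf_eq_minimum)
  show "sqcost d A (centroid A) \<in> sqcost d A ` rvec d"
    using centroid_in_rvec[OF assms(2)] by simp
next
  fix y assume "y \<in> sqcost d A ` rvec d"
  then obtain c where "y = sqcost d A c" by blast
  then show "sqcost d A (centroid A) \<le> y"
    using sqcost_eq_sqcost_centroid_plus[OF assms(1), of d c] by simp
qed

lemma approx_mean_iff:
  assumes "A \<noteq> {#}" "set_mset A \<subseteq> rvec d"
  shows "approx_mean d A eps m \<longleftrightarrow>
    m \<in> rvec d \<and> real (size A) * (enorm d (vdiff m (centroid A)))^2 \<le> eps * Opt d A"
  unfolding approx_mean_def
  using sqcost_eq_sqcost_centroid_plus[OF assms(1), of d m] Opt_eq_sqcost_centroid[OF assms]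
  by (auto simp: algebra_simps)

lemma expectation_pair_pmf_mult:
  fixes f g :: "_ \<Rightarrow> real"
  assumes "finite (set_pmf p)" "finite (set_pmf q)"
  shows "measure_pmf.expectation (pair_pmf p q) (\<lambda>x. f (fst x) * g (snd x))
       = measure_pmf.expectation p f * measure_pmf.expectation q g"
proof -
  have "measure_pmf.expectation (pair_pmf p q) (\<lambda>x. f (fst x) * g (snd x))
      = (\<Sum>x\<in>set_pmf p \<times> set_pmf q. f (fst x) * g (snd x) * pmf (pair_pmf p q) x)"
    using assms by (intro integral_measure_pmf_real) auto
  also have "\<dots> = (\<Sum>a\<in>set_pmf p. f a * pmf p a) * (\<Sum>b\<in>set_pmf q. g b * pmf q b)"
    unfolding sum_product sum.cartesian_product by (intro sum.cong) (auto simp: pmf_pair)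
  also have "\<dots> = measure_pmf.expectation p f * measure_pmf.expectation q g"
    using assms by (simp add: integral_measure_pmf_real)
  finally show ?thesis .
qed

lemma finite_set_Pi_pmf:
  "finite A \<Longrightarrow> (\<And>a. a \<in> A \<Longrightarrow> finite (set_pmf (p a))) \<Longrightarrow> finite (set_pmf (Pi_pmf A dflt p))"
  by (auto simp: set_Pi_pmf intro!: finite_PiE_dflt)

lemma expectation_square_sum_Pi_pmf:
  fixes F :: "'a \<Rightarrow> real"
  assumes "finite J" "finite (set_pmf P)" "measure_pmf.expectation P F = 0"
  shows "measure_pmf.expectation (Pi_pmf J dflt (\<lambda>_. P)) (\<lambda>z. (\<Sum>j\<in>J. F (z j))^2)
       = card J * measure_pmf.expectation P (\<lambda>x. (F x)^2)"
  using assms(1)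
proof (induction J rule: finite_induct)
  case (insert j J)
  let ?Q = "Pi_pmf J dflt (\<lambda>_. P)" and ?S = "\<lambda>z. \<Sum>i\<in>J. F (z i)"
  have upd: "(\<Sum>i\<in>J. F (if i = j then y else z i)) = ?S z" for y z
    using insert.hyps by (intro sum.cong) auto
  have int: "integrable (measure_pmf (pair_pmf P ?Q)) f" for f :: "_ \<Rightarrow> real"
    using insert.hyps assms(2) by (simp add: integrable_measure_pmf_finite finite_set_Pi_pmf)
  have "measure_pmf.expectation (Pi_pmf (insert j J) dflt (\<lambda>_. P)) (\<lambda>z. (\<Sum>i\<in>insert j J. F (z i))^2)
      = measure_pmf.expectation (pair_pmf P ?Q) (\<lambda>x. (F (fst x) + ?S (snd x))^2)"
    using insert.hyps by (simp add: Pi_pmf_insert case_prod_beta' upd)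
  also have "\<dots> = measure_pmf.expectation (pair_pmf P ?Q) (\<lambda>x. (F (fst x))^2)
      + measure_pmf.expectation (pair_pmf P ?Q) (\<lambda>x. (?S (snd x))^2)
      + 2 * measure_pmf.expectation (pair_pmf P ?Q) (\<lambda>x. F (fst x) * ?S (snd x))"
    by (simp add: power2_sum mult.assoc int)
  also have "\<dots> = real (card (insert j J)) * measure_pmf.expectation P (\<lambda>x. (F x)^2)"
  proof -
    have "measure_pmf.expectation (pair_pmf P ?Q) (\<lambda>x. (F (fst x))^2)
        = measure_pmf.expectation P (\<lambda>y. (F y)^2)"
      by (rule expectation_pair_pmf_fst)
    moreover have "measure_pmf.expectation (pair_pmf P ?Q) (\<lambda>x. (?S (snd x))^2)
        = measure_pmf.expectation ?Q (\<lambda>z. (?S z)^2)"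
      by (rule expectation_pair_pmf_snd)
    moreover have "measure_pmf.expectation (pair_pmf P ?Q) (\<lambda>x. F (fst x) * ?S (snd x)) = 0"
      using expectation_pair_pmf_mult[of P ?Q F ?S] insert.hyps assms(2,3)
      by (simp add: finite_set_Pi_pmf)
    ultimately show ?thesis
      using insert by (simp add: algebra_simps)
  qed
  finally show ?case .
qed simp

lemma prob_gt_mult_expectation_le:
  fixes u :: "'a \<Rightarrow> real"
  assumes u: "integrable (measure_pmf p) u" "\<And>x. 0 \<le> u x" and "0 < c"
  shows "measure_pmf.prob p {x. c * measure_pmf.expectation p u < u x} \<le> 1 / c"
proof (cases "measure_pmf.expectation p u = 0")
  case True
  then have "AE x in p. u x = 0"
    using integral_nonneg_eq_0_iff_AE[OF u(1)] u(2) by simp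
  then have "AE x in p. \<not> c * measure_pmf.expectation p u < u x"
    by (rule AE_mp) (simp add: True)
  from measure_pmf.prob_eq_0_AE[OF this]
  have "measure_pmf.prob p {x. c * measure_pmf.expectation p u < u x} = 0"
    by simp
  then show ?thesis using \<open>0 < c\<close> by simp
next
  case False
  then have pos: "0 < measure_pmf.expectation p u"
    using Bochner_Integration.integral_nonneg[of "measure_pmf p" u] u(2) by fastforce
  have "measure_pmf.prob p {x. c * measure_pmf.expectation p u < u x}
      \<le> measure_pmf.prob p {x \<in> space p. c * measure_pmf.expectation p u \<le> u x}"
    by (intro measure_pmf.finite_measure_mono) auto
  also have "\<dots> \<le> measure_pmf.expectation p u / (c * measure_pmf.expectation p u)"
    by (rule integral_Markov_inequality_measure[OF u(1)]) (use u(2) pos \<open>0 < c\<close> in auto)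
  also have "\<dots> = 1 / c"
    using pos by simp
  finally show ?thesis .
qed

lemma prob_Pi_pmf_all_in:
  assumes "finite I" "S \<subseteq> I"
  shows "measure_pmf.prob (Pi_pmf I dflt (\<lambda>_. Q)) {z. \<forall>i\<in>S. z i \<in> E}
       = measure_pmf.prob Q E ^ card S"
proof -
  have "{z. \<forall>i\<in>S. z i \<in> E} = Pi I (\<lambda>i. if i \<in> S then E else UNIV)"
    using assms(2) by (auto simp: Pi_def)
  then have "measure_pmf.prob (Pi_pmf I dflt (\<lambda>_. Q)) {z. \<forall>i\<in>S. z i \<in> E}
      = (\<Prod>i\<in>I. if i \<in> S then measure_pmf.prob Q E else 1)"
    using assms(1) by (simp add: measure_Pi_pmf_Pi if_distrib cong: if_cong)
  also have "\<dots> = measure_pmf.prob Q E ^ card S"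
    using assms by (simp add: prod.inter_restrict[symmetric] Int_absorb1)
  finally show ?thesis .
qed

lemma prob_Pi_pmf_third_in_le:
  assumes "finite I" "measure_pmf.prob Q E \<le> q ^ 3" "q \<le> 1"
  shows "measure_pmf.prob (Pi_pmf I dflt (\<lambda>_. Q)) {z. card I \<le> 3 * card {i\<in>I. z i \<in> E}}
       \<le> (2 * q) ^ card I"
proof -
  let ?P = "Pi_pmf I dflt (\<lambda>_. Q)"
  define Fam where "Fam = {S. S \<subseteq> I \<and> card I \<le> 3 * card S}"
  have "0 \<le> q ^ 3"
    using assms(2) measure_nonneg order_trans by blast
  then have "0 \<le> q"
    by (simp add: zero_le_odd_power)
  have fin: "finite Fam" and card_Fam: "card Fam \<le> 2 ^ card I"
    using card_mono[of "Pow I" Fam] assms(1) by (auto simp: Fam_def card_Pow finite_subset)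
  have "{z. card I \<le> 3 * card {i\<in>I. z i \<in> E}} \<subseteq> (\<Union>S\<in>Fam. {z. \<forall>i\<in>S. z i \<in> E})"
  proof
    fix z assume "z \<in> {z. card I \<le> 3 * card {i\<in>I. z i \<in> E}}"
    then have "{i\<in>I. z i \<in> E} \<in> Fam" by (auto simp: Fam_def)
    then show "z \<in> (\<Union>S\<in>Fam. {z. \<forall>i\<in>S. z i \<in> E})" by blast
  qed
  then have "measure_pmf.prob ?P {z. card I \<le> 3 * card {i\<in>I. z i \<in> E}}
      \<le> measure_pmf.prob ?P (\<Union>S\<in>Fam. {z. \<forall>i\<in>S. z i \<in> E})"
    by (intro measure_pmf.finite_measure_mono) auto
  also have "\<dots> \<le> (\<Sum>S\<in>Fam. measure_pmf.prob ?P {z. \<forall>i\<in>S. z i \<in> E})"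
    by (intro measure_pmf.finite_measure_subadditive_finite fin) auto
  also have "\<dots> \<le> (\<Sum>S\<in>Fam. q ^ card I)"
  proof (intro sum_mono)
    fix S assume "S \<in> Fam"
    then have "S \<subseteq> I" "card I \<le> 3 * card S" by (auto simp: Fam_def)
    then have "measure_pmf.prob ?P {z. \<forall>i\<in>S. z i \<in> E} \<le> (q ^ 3) ^ card S"
      using assms(1,2) by (simp add: prob_Pi_pmf_all_in power_mono)
    also have "\<dots> \<le> q ^ card I"
      using \<open>card I \<le> 3 * card S\<close> \<open>0 \<le> q\<close> assms(3)
      by (simp add: power_mult[symmetric] power_decreasing)
    finally show "measure_pmf.prob ?P {z. \<forall>i\<in>S. z i \<in> E} \<le> q ^ card I" .
  qed
  also have "\<dots> \<le> 2 ^ card I * q ^ card I"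
    using card_Fam \<open>0 \<le> q\<close> by (simp add: mult_right_mono)
  finally show ?thesis by (simp add: power_mult_distrib)
qed

lemma Pi_pmf_Times:
  assumes "finite I" "finite J"
  shows "Pi_pmf (I \<times> J) dflt p
       = map_pmf case_prod (Pi_pmf I (\<lambda>_. dflt) (\<lambda>i. Pi_pmf J dflt (\<lambda>j. p (i, j))))"
  (is "_ = map_pmf case_prod ?R")
proof (rule pmf_eqI)
  fix x :: "_ \<times> _ \<Rightarrow> _"
  have "pmf (Pi_pmf (I \<times> J) dflt p) x = pmf ?R (curry x)"
    using assms by (auto simp: pmf_Pi prod.cartesian_product fun_eq_iff)
  also have "\<dots> = pmf (map_pmf case_prod ?R) x"
    by (metis case_prod_curry curry_case_prod injI pmf_map_inj')
  finally show "pmf (Pi_pmf (I \<times> J) dflt p) x = pmf (map_pmf case_prod ?R) x" .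
qed

lemma expectation_pmf_of_multiset:
  fixes f :: "_ \<Rightarrow> real"
  assumes "A \<noteq> {#}"
  shows "measure_pmf.expectation (pmf_of_multiset A) f = (\<Sum>p\<in>#A. f p) / real (size A)"
proof -
  have "measure_pmf.expectation (pmf_of_multiset A) f
      = (\<Sum>x\<in>set_mset A. f x * pmf (pmf_of_multiset A) x)"
    using assms by (intro integral_measure_pmf_real) auto
  then show ?thesis
    using assms by (simp add: sum_mset_eq_sum_count sum_divide_distrib algebra_simps)
qed

definition sample_pmf :: "(nat \<Rightarrow> real) multiset \<Rightarrow> nat \<Rightarrow> (nat \<Rightarrow> nat \<Rightarrow> real) pmf" where
  "sample_pmf A s = Pi_pmf {..<s} (\<lambda>_. 0) (\<lambda>_. pmf_of_multiset A)"

definition sample_mean :: "nat \<Rightarrow> (nat \<Rightarrow> nat \<Rightarrow> real) \<Rightarrow> nat \<Rightarrow> real" where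
  "sample_mean s z = (\<lambda>t. (\<Sum>j<s. z j t) / real s)"

lemma group_mean_eq_sample_mean: "group_mean s x i = sample_mean s (curry x i)"
  by (simp add: group_mean_def sample_mean_def)

lemma draws_eq_Pi_pmf_sample_pmf:
  "draws A k s = map_pmf case_prod (Pi_pmf {..<k} (\<lambda>_ _. 0) (\<lambda>_. sample_pmf A s))"
  unfolding draws_def sample_pmf_def atLeast0LessThan by (rule Pi_pmf_Times) simp_all

lemma expectation_sample_mean_dist:
  assumes "A \<noteq> {#}" "0 < s"
  shows "measure_pmf.expectation (sample_pmf A s)
           (\<lambda>z. (enorm d (vdiff (sample_mean s z) (centroid A)))^2)
       = sqcost d A (centroid A) / (real (size A) * real s)"
proof -
  let ?\<mu> = "centroid A" and ?P = "pmf_of_multiset A"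
  have int: "integrable (measure_pmf (sample_pmf A s)) f" for f :: "_ \<Rightarrow> real"
    using assms(1) by (simp add: integrable_measure_pmf_finite sample_pmf_def finite_set_Pi_pmf)
  have "sample_mean s z t - ?\<mu> t = (\<Sum>j<s. z j t - ?\<mu> t) / real s" for z t
    using assms(2) by (simp add: sample_mean_def sum_subtractf field_simps)
  then have "(enorm d (vdiff (sample_mean s z) ?\<mu>))^2
      = (\<Sum>t<d. (\<Sum>j<s. z j t - ?\<mu> t)^2) / (real s)^2" for z
    by (simp add: enorm_squared vdiff_def power_divide flip: sum_divide_distrib)
  then have "measure_pmf.expectation (sample_pmf A s) (\<lambda>z. (enorm d (vdiff (sample_mean s z) ?\<mu>))^2)
      = (\<Sum>t<d. measure_pmf.expectation (sample_pmf A s) (\<lambda>z. (\<Sum>j<s. z j t - ?\<mu> t)^2)) / (real s)^2"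
    by (simp add: int Bochner_Integration.integral_sum)
  also have "\<dots> = (\<Sum>t<d. real s * measure_pmf.expectation ?P (\<lambda>p. (p t - ?\<mu> t)^2)) / (real s)^2"
    unfolding sample_pmf_def
    using assms(1) by (subst expectation_square_sum_Pi_pmf)
      (simp_all add: expectation_pmf_of_multiset sum_mset_minus_centroid)
  also have "\<dots> = sqcost d A ?\<mu> / (real (size A) * real s)"
    using assms by (simp add: expectation_pmf_of_multiset sqcost_def enorm_squared vdiff_def
        sum_mset_sum_swap power2_eq_square[of "real s"]
        flip: sum_divide_distrib sum_distrib_left)
  finally show ?thesis .
qed

lemma quarter_power_le:
  assumes "0 < \<delta>" "ln (1 / \<delta>) \<le> real k"
  shows "(1/4::real) ^ k \<le> \<delta>"
proof -
  have "(1/4::real) ^ k \<le> exp (-1) ^ k"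
    using exp_le by (intro power_mono) (auto simp: exp_minus field_simps)
  also have "\<dots> = exp (- real k)"
    by (simp add: exp_of_nat_mult[symmetric])
  also have "\<dots> \<le> exp (- ln (1 / \<delta>))"
    using assms(2) by simp
  also have "\<dots> = \<delta>"
    using assms(1) by (simp add: ln_div)
  finally show ?thesis .
qed

lemma sqrt_less_iff_less_square: "0 \<le> e \<Longrightarrow> sqrt a < e \<longleftrightarrow> a < e^2"
  by (metis abs_of_nonneg real_sqrt_abs real_sqrt_less_iff)

lemma geo_median_approx_mean:
  assumes A: "A \<noteq> {#}" "set_mset A \<subseteq> rvec d" and gm: "geo_median d k y m"
    and few: "3 * card {i\<in>{..<k}. r < enorm d (vdiff (y i) (centroid A))} < k"
    and close: "real (size A) * (4 * r)^2 \<le> eps * Opt d A"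
  shows "approx_mean d A eps m"
proof -
  have "enorm d (vdiff m (centroid A)) \<le> 4 * r"
  proof (rule sum_dist_minimiser_close[where \<delta> = "\<lambda>x y. enorm d (vdiff x y)" and I = "{..<k}"])
    show "(\<Sum>i<k. enorm d (vdiff (y i) m)) \<le> (\<Sum>i<k. enorm d (vdiff (y i) (centroid A)))"
      using gm centroid_in_rvec[OF A(2)] by (simp add: geo_median_def)
    show "3 * card {i\<in>{..<k}. r < enorm d (vdiff (y i) (centroid A))} < card {..<k}"
      using few by simp
  qed (rule enorm_vdiff_commute enorm_vdiff_triangle finite_lessThan)+
  then have "real (size A) * (enorm d (vdiff m (centroid A)))^2 \<le> real (size A) * (4 * r)^2"
    by (intro mult_left_mono power_mono) (auto simp: enorm_nonneg)
  with close show ?thesis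
    using gm approx_mean_iff[OF A] by (simp add: geo_median_def)
qed

lemma prob_sample_mean_far_le:
  assumes "A \<noteq> {#}" "0 < s" "0 < c"
  shows "measure_pmf.prob (sample_pmf A s)
      {z. c * (sqcost d A (centroid A) / (real (size A) * real s))
            < (enorm d (vdiff (sample_mean s z) (centroid A)))^2} \<le> 1 / c"
  using prob_gt_mult_expectation_le[of "sample_pmf A s"
      "\<lambda>z. (enorm d (vdiff (sample_mean s z) (centroid A)))^2", OF _ _ \<open>0 < c\<close>]
    expectation_sample_mean_dist[OF assms(1,2), of d] assms(1)
  by (simp add: integrable_measure_pmf_finite sample_pmf_def finite_set_Pi_pmf)

lemma median_of_means_approx_mean:
  assumes A: "A \<noteq> {#}" "set_mset A \<subseteq> rvec d" and eps: "0 < eps" "8192 \<le> eps * real s"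
  shows "1 - (1/4)^k \<le> measure_pmf.prob (draws A k s)
           {x. \<forall>m. geo_median d k (group_mean s x) m \<longrightarrow> approx_mean d A eps m}"
    (is "_ \<le> measure_pmf.prob _ ?good")
proof -
  have "0 < s" using eps by (cases s) auto
  have opt: "Opt d A = sqcost d A (centroid A)" "0 \<le> Opt d A"
    using Opt_eq_sqcost_centroid[OF A] sqcost_nonneg by auto
  define r where "r = sqrt (512 * (Opt d A / (real (size A) * real s)))"
  define far where "far = {z. r < enorm d (vdiff (sample_mean s z) (centroid A))}"
  define Q where "Q = Pi_pmf {..<k} (\<lambda>_ _. 0) (\<lambda>_. sample_pmf A s)"
  define few_far where "few_far = {z. 3 * card {i\<in>{..<k}. z i \<in> far} < k}"
  have "measure_pmf.prob (sample_pmf A s) far \<le> (1/8)^3"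
    using prob_sample_mean_far_le[OF A(1) \<open>0 < s\<close>, of 512 d]
    by (simp add: far_def r_def sqrt_less_iff_less_square enorm_nonneg opt power_divide)
  then have "measure_pmf.prob Q (- few_far) \<le> (1/4)^k"
    using prob_Pi_pmf_third_in_le[of "{..<k}" "sample_pmf A s" far "1/8"]
    by (simp add: Q_def few_far_def Compl_eq not_less)
  moreover have "few_far \<subseteq> case_prod -` ?good"
  proof -
    have "real (size A) * (4 * r)^2 = 8192 * Opt d A / real s"
      using A(1) opt(2) by (simp add: r_def power_mult_distrib)
    also have "\<dots> \<le> eps * Opt d A"
      using mult_right_mono[OF eps(2) opt(2)] \<open>0 < s\<close> by (simp add: field_simps)
    finally show ?thesis
      using geo_median_approx_mean[OF A]
      by (auto simp: group_mean_eq_sample_mean few_far_def far_def)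
  qed
  then have "measure_pmf.prob Q few_far \<le> measure_pmf.prob (draws A k s) ?good"
    by (simp add: draws_eq_Pi_pmf_sample_pmf Q_def[symmetric] measure_pmf.finite_measure_mono)
  moreover have "measure_pmf.prob Q few_far = 1 - measure_pmf.prob Q (- few_far)"
    using measure_pmf.prob_compl[of "- few_far" Q] by (simp add: Compl_eq_Diff_UNIV Diff_Diff_Int)
  ultimately show ?thesis by linarith
qed

theorem corollary3p6:
  shows "\<exists>a b :: real. a > 0 \<and> b > 0 \<and>
    (\<forall>(d::nat) (A :: (nat \<Rightarrow> real) multiset) (eps::real) (delta::real).
       A \<noteq> {#} \<longrightarrow> set_mset A \<subseteq> rvec d \<longrightarrow>
       0 < eps \<longrightarrow> eps < 1 \<longrightarrow> 0 < delta \<longrightarrow> delta < 1 \<longrightarrow>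
       (let k = nat \<lceil>b * ln (1 / delta)\<rceil>; s = nat \<lceil>a / eps\<rceil> in
        measure_pmf.prob (draws A k s)
          {x. \<forall>m. geo_median d k (group_mean s x) m \<longrightarrow> approx_mean d A eps m}
        \<ge> 1 - delta))"
proof (rule exI[of _ 8192], rule exI[of _ 1], intro conjI allI impI)
  fix d A and eps delta :: real
  assume A: "A \<noteq> {#}" "set_mset A \<subseteq> rvec d" and "0 < eps" "eps < 1" "0 < delta" "delta < 1"
  define k where "k = nat \<lceil>ln (1 / delta)\<rceil>"
  define s where "s = nat \<lceil>8192 / eps\<rceil>"
  have "8192 / eps \<le> real s"
    unfolding s_def by (rule of_nat_ceiling)
  then have "8192 \<le> eps * real s"
    using \<open>0 < eps\<close> by (simp add: field_simps)
  then have "1 - (1/4)^k \<le> measure_pmf.prob (draws A k s)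
      {x. \<forall>m. geo_median d k (group_mean s x) m \<longrightarrow> approx_mean d A eps m}"
    using median_of_means_approx_mean[OF A \<open>0 < eps\<close>] by blast
  moreover have "(1/4::real)^k \<le> delta"
    unfolding k_def by (intro quarter_power_le[OF \<open>0 < delta\<close>] of_nat_ceiling)
  ultimately show "let k = nat \<lceil>1 * ln (1 / delta)\<rceil>; s = nat \<lceil>8192 / eps\<rceil> in
      1 - delta \<le> measure_pmf.prob (draws A k s)
        {x. \<forall>m. geo_median d k (group_mean s x) m \<longrightarrow> approx_mean d A eps m}"
    by (simp add: k_def s_def Let_def)
qed simp_all

end
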